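(* Let $\varphi$ be an AND-OR formula in which every gate has fan-in two, with its checkpoints placed and the associated formula $\varphi'$ formed as described in the context. Let $v'$ be an internal vertex of $\varphi'$, with children $c'_1,c'_2,\dots,c'_{J+1}$ sorted in decreasing order of their distances from the root of $\varphi'$, and with $s_{c'_1}\ge s_{c'_2}$. Then for every $j\ge 2$, $s_{c'_j}\le s_{v'}/2$. If $v'$ is not a small vertex, then $s_{c'_1}\le s_{v'}-\frac{1}{\sqrt 2}\sqrt{s_{v'}}$.
   Context: An AND-OR formula with fan-in-two gates is a rooted binary tree (root $r$) whose internal vertices are AND or OR gates and whose leaves are input variables. For an internal vertex $v$, $s_1(v)\ge s_2(v)\ge1$ are the numbers of leaves of its two input subformulas (child 1 is a larger one, ties broken arbitrarily). Define $\alpha(v)=\epsilon(v)=\bigl((\sqrt{s_1(v)}+\sqrt{s_2(v)})/\sqrt{s_1(v)+s_2(v)}\bigr)^{1/2}$. Checkpoint placement. Step 1: for every internal vertex $v$, mark the edge from $v$ to its smaller input subformula (child 2). Afterwards every internal vertex has exactly one unmarked edge to a child, so the unmarked edges partition the internal vertices into paths; let $\mathcal{S}$ be the set of vertices that are, for one of these paths, the endpoint closer to $r$. Step 2: for each such path, starting at its far end and moving toward the root, keep track of the product of $\alpha(v)$ (for AND gates) or $\epsilon(v)$ (for OR gates) over the internal vertices added so far; after adding a vertex that makes this product exceed $\sqrt e$, split the path by marking (checkpointing) the edge from that vertex to the next vertex of the path toward the root, and restart the product. The marked edges ("checkpoints") divide the internal vertices of $\varphi$ into checkpointed paths. The formula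 $\varphi'$: its internal vertices are the checkpointed paths $\xi$ of $\varphi$, its leaves are the leaves of $\varphi$; the children in $\varphi'$ of a path $\xi$ with $J$ internal vertices are the $J+1$ subformulas hanging off $\xi$ (each a leaf of $\varphi$ or the path beginning at the corresponding child vertex). For a vertex $v'$ of $\varphi'$, $s_{v'}$ is the number of leaves of $\varphi$ in the subformula rooted at $v'$ (equal to $1$ for a leaf). An internal vertex $v'$ of $\varphi'$ is small if its checkpointed path has an endpoint in $\mathcal{S}$. *)

theory Defs
  imports Complex_Main "HOL-Library.Sublist"
begin

datatype gate = AND | OR

datatype 'a formula = Leaf 'a | Gate gate "'a formula" "'a formula"

fun nleaves :: "'a formula \<Rightarrow> nat" where
  "nleaves (Leaf x) = 1"
| "nleaves (Gate g l r) = nleaves l + nleaves r"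

text \<open>Vertices are addressed by positions: lists of directions from the root
  (False = left input, True = right input).\<close>
type_synonym pos = "bool list"

fun subf :: "'a formula \<Rightarrow> pos \<Rightarrow> 'a formula option" where
  "subf t [] = Some t"
| "subf (Leaf x) (b # p) = None"
| "subf (Gate g l r) (b # p) = subf (if b then r else l) p"

definition internal :: "'a formula \<Rightarrow> pos \<Rightarrow> bool" where
  "internal t p \<longleftrightarrow> (\<exists>g l r. subf t p = Some (Gate g l r))"

definition sz :: "'a formula \<Rightarrow> pos \<Rightarrow> nat" where
  "sz t p = (case subf t p of Some u \<Rightarrow> nleaves u | None \<Rightarrow> 0)"

text \<open>Tie-breaking: tb p says which input of the internal vertex p is child 1
  (a larger input subformula); the other one is child 2.\<close>
definition child1 :: "(pos \<Rightarrow> bool) \<Rightarrow> pos \<Rightarrow> pos" where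
  "child1 tb p = p @ [tb p]"

definition child2 :: "(pos \<Rightarrow> bool) \<Rightarrow> pos \<Rightarrow> pos" where
  "child2 tb p = p @ [\<not> tb p]"

definition admissible_tb :: "'a formula \<Rightarrow> (pos \<Rightarrow> bool) \<Rightarrow> bool" where
  "admissible_tb t tb \<longleftrightarrow>
     (\<forall>p. internal t p \<longrightarrow> sz t (child2 tb p) \<le> sz t (child1 tb p))"

definition alpha_w :: "nat \<Rightarrow> nat \<Rightarrow> real" where
  "alpha_w s1 s2 = sqrt ((sqrt (real s1) + sqrt (real s2)) / sqrt (real s1 + real s2))"

definition eps_w :: "nat \<Rightarrow> nat \<Rightarrow> real" where
  "eps_w s1 s2 = sqrt ((sqrt (real s1) + sqrt (real s2)) / sqrt (real s1 + real s2))"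

fun gate_w :: "gate \<Rightarrow> nat \<Rightarrow> nat \<Rightarrow> real" where
  "gate_w AND s1 s2 = alpha_w s1 s2"
| "gate_w OR s1 s2 = eps_w s1 s2"

text \<open>Restart of the running product after a checkpoint.\<close>
definition restart :: "real \<Rightarrow> real" where
  "restart a = (if a > sqrt (exp 1) then 1 else a)"

text \<open>acc tb p u, for u the subformula at position p, is the running product of
  Step 2 right after the vertex p has been added (on the unmarked path through p,
  processed from its far end towards the root).\<close>
fun acc :: "(pos \<Rightarrow> bool) \<Rightarrow> pos \<Rightarrow> 'a formula \<Rightarrow> real" where
  "acc tb p (Leaf x) = 1"
| "acc tb p (Gate g l r) =
     (if tb p
      then restart (acc tb (p @ [True]) r) * gate_w g (nleaves r) (nleaves l)
      else restart (acc tb (p @ [False]) l) * gate_w g (nleaves l) (nleaves r))"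

text \<open>Step 2 checkpoint at internal vertex p: the edge from p to the next vertex of
  its path toward the root is marked.\<close>
definition cut :: "'a formula \<Rightarrow> (pos \<Rightarrow> bool) \<Rightarrow> pos \<Rightarrow> bool" where
  "cut t tb p \<longleftrightarrow> internal t p \<and>
     (case subf t p of Some u \<Rightarrow> acc tb p u > sqrt (exp 1) | None \<Rightarrow> False)"

text \<open>The edge from the parent of p to p is marked (Step 1: p is child 2 of its
  parent; Step 2: checkpoint).\<close>
definition marked :: "'a formula \<Rightarrow> (pos \<Rightarrow> bool) \<Rightarrow> pos \<Rightarrow> bool" where
  "marked t tb p \<longleftrightarrow> p \<noteq> [] \<and> (p = child2 tb (butlast p) \<or> cut t tb p)"

text \<open>The set S: endpoints closer to the root of the paths of Step 1.\<close>
definition inS :: "'a formula \<Rightarrow> (pos \<Rightarrow> bool) \<Rightarrow> pos \<Rightarrow> bool" where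
  "inS t tb p \<longleftrightarrow> internal t p \<and> (p = [] \<or> p = child2 tb (butlast p))"

text \<open>Internal vertices of phi' = checkpointed paths, identified by their top vertex.\<close>
definition cp_top :: "'a formula \<Rightarrow> (pos \<Rightarrow> bool) \<Rightarrow> pos \<Rightarrow> bool" where
  "cp_top t tb v \<longleftrightarrow> internal t v \<and> (v = [] \<or> marked t tb v)"

text \<open>Internal vertices of phi on the checkpointed path with top v.\<close>
definition seg :: "'a formula \<Rightarrow> (pos \<Rightarrow> bool) \<Rightarrow> pos \<Rightarrow> pos set" where
  "seg t tb v = {u. internal t u \<and> prefix v u \<and>
      (\<forall>k. length v < k \<and> k \<le> length u \<longrightarrow> \<not> marked t tb (take k u))}"

text \<open>Children in phi' of the path with top v: the subformulas hanging off it.\<close>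
definition children' :: "'a formula \<Rightarrow> (pos \<Rightarrow> bool) \<Rightarrow> pos \<Rightarrow> pos set" where
  "children' t tb v = {c. c \<noteq> [] \<and> butlast c \<in> seg t tb v \<and> c \<notin> seg t tb v}"

definition bottom :: "'a formula \<Rightarrow> (pos \<Rightarrow> bool) \<Rightarrow> pos \<Rightarrow> pos \<Rightarrow> bool" where
  "bottom t tb v u \<longleftrightarrow> u \<in> seg t tb v \<and> child1 tb u \<notin> seg t tb v"

definition small :: "'a formula \<Rightarrow> (pos \<Rightarrow> bool) \<Rightarrow> pos \<Rightarrow> bool" where
  "small t tb v \<longleftrightarrow> inS t tb v \<or> (\<exists>u. bottom t tb v u \<and> inS t tb u)"

end

theory Submission
  imports Defs
begin

(*
  A checkpointed path with top v is a chain v, child1 v, child1 (child1 v), ..., b; its children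
  in phi' are the child2 u of its vertices u together with child1 b, so the two deepest children
  are the two children of the bottom vertex b. Every child2 u has at most half the leaves of
  u, hence of v, and the sibling c_2 of c_1 has at most half of sz b <= sz v.

  If v is not small, its top edge is a Step 2 checkpoint, so the running product at v exceeds
  sqrt e. The product restarts just below b, so its square is the product of
  alpha(u)^2 <= 1 + sqrt s_2(u) / sqrt s(u) <= exp (s_2(u) / sqrt m) over the path, where
  m = sz (child1 b) <= s(u). The s_2(u) add up to sz v - m, so e < exp ((sz v - m) / sqrt m),
  i.e. sqrt m < sz v - m, and this forces m <= sz v - sqrt (sz v / 2).
*)

lemma subf_append:
  "subf t (p @ q) = (case subf t p of None \<Rightarrow> None | Some u \<Rightarrow> subf u q)"
  by (induction t p rule: subf.induct) auto

lemma nleaves_pos: "1 \<le> nleaves u"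
  by (induction u) auto

lemma internal_prefix:
  assumes "prefix q p" "internal t p"
  shows "internal t q"
proof -
  obtain zs where p: "p = q @ zs" using assms(1) prefix_def by blast
  show ?thesis
  proof (cases zs)
    case Nil then show ?thesis using assms(2) p by simp
  next
    case (Cons x zs')
    obtain w where "subf t q = Some w" "subf w (x # zs') \<noteq> None"
      using assms(2) unfolding p Cons internal_def subf_append by (auto split: option.splits)
    then show ?thesis unfolding internal_def by (cases w) auto
  qed
qed

lemma sz_antimono: "prefix v u \<Longrightarrow> sz t u \<le> sz t v"
proof -
  have "nleaves w \<le> nleaves u" if "subf u q = Some w" for u q and w :: "'a formula"
    using that by (induction u q rule: subf.induct) (fastforce split: if_splits)+
  moreover assume "prefix v u"
  then obtain zs where "u = v @ zs" using prefix_def by blast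
  ultimately show ?thesis
    by (auto simp: sz_def subf_append split: option.splits)
qed

lemma
  assumes "internal t p"
  shows sz_child_sum: "sz t (child1 tb p) + sz t (child2 tb p) = sz t p"
    and sz_child1_pos: "1 \<le> sz t (child1 tb p)"
    and sz_child2_pos: "1 \<le> sz t (child2 tb p)"
  using assms nleaves_pos
  by (auto simp: internal_def sz_def child1_def child2_def subf_append)

lemma sz_child2_le_half:
  "admissible_tb t tb \<Longrightarrow> internal t p \<Longrightarrow> real (sz t (child2 tb p)) \<le> real (sz t p) / 2"
  using sz_child_sum[of t p tb] by (auto simp: admissible_tb_def)

lemma butlast_child_cases:
  "x \<noteq> [] \<Longrightarrow> x = child1 tb (butlast x) \<or> x = child2 tb (butlast x)"
  by (cases x rule: rev_cases) (auto simp: child1_def child2_def)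

lemma butlast_child [simp]: "butlast (child1 tb p) = p" "butlast (child2 tb p) = p"
  by (simp_all add: child1_def child2_def)

lemma child1_neq_child2 [simp]:
  "child1 tb p \<noteq> child2 tb p" "child2 tb p \<noteq> child1 tb p"
  by (simp_all add: child1_def child2_def)

lemma seg_internal: "u \<in> seg t tb v \<Longrightarrow> internal t u"
  and seg_prefix: "u \<in> seg t tb v \<Longrightarrow> prefix v u"
  by (auto simp: seg_def)

lemma top_in_seg: "internal t v \<Longrightarrow> v \<in> seg t tb v"
  by (auto simp: seg_def)

lemma seg_prefix_closed:
  assumes "u \<in> seg t tb v" "prefix v w" "prefix w u"
  shows "w \<in> seg t tb v"
proof -
  have "take k w = take k u" if "k \<le> length w" for k
    using assms(3) that by (auto simp: prefix_def)
  then show ?thesis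
    using assms internal_prefix[OF assms(3)] prefix_length_le[OF assms(3)]
    by (auto simp: seg_def)
qed

lemma seg_not_marked:
  assumes "u \<in> seg t tb v" "u \<noteq> v"
  shows "\<not> marked t tb u"
proof -
  have "length v < length u"
    using prefix_length_less[OF strict_prefixI[OF seg_prefix[OF assms(1)] assms(2)[symmetric]]] .
  then show ?thesis using assms(1) by (auto simp: seg_def)
qed

lemma seg_parent:
  assumes "u \<in> seg t tb v" "u \<noteq> v"
  shows "butlast u \<in> seg t tb v" "u = child1 tb (butlast u)"
proof -
  have "prefix v u" using assms(1) by (rule seg_prefix)
  then have "u \<noteq> []" using assms(2) by auto
  then have "u = butlast u @ [last u]" by simp
  then have "prefix v (butlast u)"
    using \<open>prefix v u\<close> assms(2) prefix_snoc[of v "butlast u" "last u"] by simp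
  then show "butlast u \<in> seg t tb v"
    using assms(1) seg_prefix_closed prefixeq_butlast by blast
  show "u = child1 tb (butlast u)"
    using butlast_child_cases[OF \<open>u \<noteq> []\<close>, of tb] seg_not_marked[OF assms] \<open>u \<noteq> []\<close>
    by (auto simp: marked_def)
qed

lemma seg_eq_funpow_child1:
  "u \<in> seg t tb v \<Longrightarrow> u = (child1 tb ^^ (length u - length v)) v"
proof (induction "length u - length v" arbitrary: u)
  case 0
  then show ?case using seg_prefix[OF "0.prems"] by (auto simp: prefix_def)
next
  case (Suc n)
  then have "u \<noteq> v" by auto
  with Suc.prems have "butlast u \<in> seg t tb v" "u = child1 tb (butlast u)"
    by (rule seg_parent)+
  moreover have "length (butlast u) - length v = n"
    using Suc.hyps by simp
  ultimately show ?case
    using Suc.hyps(1)[of "butlast u"] Suc.hyps(2)[symmetric] by simp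
qed

lemma seg_eq_if_length_eq:
  "u \<in> seg t tb v \<Longrightarrow> u' \<in> seg t tb v \<Longrightarrow> length u = length u' \<Longrightarrow> u = u'"
  using seg_eq_funpow_child1[of u t tb v] seg_eq_funpow_child1[of u' t tb v] by simp

lemma seg_prefix_if_length_le:
  assumes "u \<in> seg t tb v" "w \<in> seg t tb v" "length u \<le> length w"
  shows "prefix u w"
proof -
  have len: "length (take (length u) w) = length u"
    using assms(3) by simp
  have "prefix v (take (length u) w)"
    using prefix_length_prefix[OF seg_prefix[OF assms(2)] take_is_prefix]
      prefix_length_le[OF seg_prefix[OF assms(1)]] len by simp
  then have "take (length u) w \<in> seg t tb v"
    using assms(2) seg_prefix_closed take_is_prefix by blast
  then have "take (length u) w = u"
    using seg_eq_if_length_eq[OF _ assms(1)] len by blast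
  then show ?thesis
    using take_is_prefix[of "length u" w] by simp
qed

lemma seg_extend:
  assumes "u \<in> seg t tb v" "internal t (u @ [x])" "\<not> marked t tb (u @ [x])"
  shows "u @ [x] \<in> seg t tb v"
proof -
  have "\<not> marked t tb (take k (u @ [x]))" if "length v < k" "k \<le> length (u @ [x])" for k
  proof (cases "k = length (u @ [x])")
    case False
    then show ?thesis using assms(1) that by (auto simp: seg_def)
  qed (use assms(3) in simp)
  then show ?thesis
    using assms(1,2) seg_prefix[OF assms(1)] by (auto simp: seg_def)
qed

lemma child2_notin_seg: "u \<in> seg t tb v \<Longrightarrow> child2 tb u \<notin> seg t tb v"
proof
  assume u: "u \<in> seg t tb v" and c: "child2 tb u \<in> seg t tb v"
  have "child2 tb u \<noteq> v"
    using prefix_length_le[OF seg_prefix[OF u]] by (auto simp: child2_def)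
  then have "child2 tb u = child1 tb u"
    using seg_parent(2)[OF c] by (simp add: child2_def)
  then show False by simp
qed

lemma bottom_deepest:
  assumes "bottom t tb v b" "u \<in> seg t tb v"
  shows "prefix u b"
proof (rule ccontr)
  assume "\<not> prefix u b"
  have b: "b \<in> seg t tb v" "child1 tb b \<notin> seg t tb v"
    using assms(1) by (auto simp: bottom_def)
  then have "length b < length u"
    using seg_prefix_if_length_le[OF assms(2) b(1)] \<open>\<not> prefix u b\<close> not_le by blast
  define w where "w = take (Suc (length b)) u"
  have "prefix b u"
    using seg_prefix_if_length_le[OF b(1) assms(2)] \<open>length b < length u\<close> by simp
  have "prefix b w" "prefix w u" "length w = Suc (length b)"
    using \<open>prefix b u\<close> \<open>length b < length u\<close>
    by (auto simp: w_def prefix_def intro: append_take_drop_id[symmetric])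
  then have w: "w \<in> seg t tb v"
    using seg_prefix_closed assms(2) seg_prefix[OF b(1)] prefix_order.trans by blast
  moreover have "w \<noteq> v"
    using \<open>length w = Suc (length b)\<close> prefix_length_le[OF seg_prefix[OF b(1)]] by auto
  ultimately have "butlast w \<in> seg t tb v" "w = child1 tb (butlast w)"
    by (rule seg_parent)+
  moreover have "butlast w = b"
    using seg_eq_if_length_eq[OF calculation(1) b(1)] \<open>length w = Suc (length b)\<close> by simp
  ultimately show False using w b by simp
qed

lemma bottom_unique: "bottom t tb v b \<Longrightarrow> bottom t tb v b' \<Longrightarrow> b = b'"
  using bottom_deepest prefix_order.antisym by (metis bottom_def)

lemma children'_cases:
  assumes "x \<in> children' t tb v"
  obtains "butlast x \<in> seg t tb v" "x = child2 tb (butlast x)"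
  | "bottom t tb v (butlast x)" "x = child1 tb (butlast x)"
proof -
  have x: "x \<noteq> []" "butlast x \<in> seg t tb v" "x \<notin> seg t tb v"
    using assms by (auto simp: children'_def)
  then consider "x = child1 tb (butlast x)" | "x = child2 tb (butlast x)"
    using butlast_child_cases by blast
  then show ?thesis
    using that x by cases (auto simp: bottom_def)
qed

lemma child2_in_children': "u \<in> seg t tb v \<Longrightarrow> child2 tb u \<in> children' t tb v"
  using child2_notin_seg[of u t tb v] unfolding children'_def by (simp add: child2_def)

lemma child1_bottom_in_children': "bottom t tb v b \<Longrightarrow> child1 tb b \<in> children' t tb v"
  by (simp add: bottom_def children'_def child1_def)

lemma sz_seg_le: "u \<in> seg t tb v \<Longrightarrow> sz t u \<le> sz t v"
  by (simp add: seg_prefix sz_antimono)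

definition acc_at :: "'a formula \<Rightarrow> (pos \<Rightarrow> bool) \<Rightarrow> pos \<Rightarrow> real" where
  "acc_at t tb p = (case subf t p of Some u \<Rightarrow> acc tb p u | None \<Rightarrow> 0)"

definition branch_gain :: "nat \<Rightarrow> nat \<Rightarrow> real" where
  "branch_gain s1 s2 = (sqrt (real s1) + sqrt (real s2)) / sqrt (real s1 + real s2)"

lemma gate_w_sq: "(gate_w g s1 s2)\<^sup>2 = branch_gain s1 s2"
  by (cases g) (simp_all add: alpha_w_def eps_w_def branch_gain_def)

lemma branch_gain_le_exp:
  assumes "1 \<le> s2" "1 \<le> m" "m \<le> s1 + s2"
  shows "branch_gain s1 s2 \<le> exp (real s2 / sqrt (real m))"
proof -
  have "sqrt (real s1) / sqrt (real s1 + real s2) \<le> 1"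
    using assms(1) by (intro divide_le_eq_1_pos[THEN iffD2]) auto
  then have "branch_gain s1 s2 \<le> 1 + sqrt (real s2) / sqrt (real s1 + real s2)"
    by (simp add: branch_gain_def add_divide_distrib)
  also have "sqrt (real s2) / sqrt (real s1 + real s2) \<le> real s2 / sqrt (real m)"
  proof (rule frac_le)
    show "sqrt (real s2) \<le> real s2"
      using mult_right_mono[OF real_sqrt_ge_one[of "real s2"], of "sqrt (real s2)"] assms(1)
      by simp
  qed (use assms in auto)
  also have "1 + real s2 / sqrt (real m) \<le> exp (real s2 / sqrt (real m))"
    by (rule exp_ge_add_one_self)
  finally show ?thesis by simp
qed

lemma cut_iff_acc_at: "cut t tb p \<longleftrightarrow> internal t p \<and> sqrt (exp 1) < acc_at t tb p"
  by (auto simp: cut_def acc_at_def internal_def split: option.splits)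

lemma acc_at_sq_step:
  assumes "internal t p"
  shows "(acc_at t tb p)\<^sup>2
    = (restart (acc_at t tb (child1 tb p)))\<^sup>2 * branch_gain (sz t (child1 tb p)) (sz t (child2 tb p))"
proof -
  obtain g l r where "subf t p = Some (Gate g l r)"
    using assms by (auto simp: internal_def)
  then show ?thesis
    by (simp add: acc_at_def sz_def child1_def child2_def subf_append power_mult_distrib gate_w_sq)
qed

lemma restart_acc_at_seg:
  assumes "u \<in> seg t tb v" "u \<noteq> v"
  shows "restart (acc_at t tb u) = acc_at t tb u"
proof -
  have "u \<noteq> []" using seg_prefix[OF assms(1)] assms(2) by auto
  then have "\<not> cut t tb u" using seg_not_marked[OF assms] by (simp add: marked_def)
  then show ?thesis using seg_internal[OF assms(1)] by (simp add: cut_iff_acc_at restart_def)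
qed

lemma restart_acc_at_child1_bottom:
  assumes "bottom t tb v b"
  shows "restart (acc_at t tb (child1 tb b)) = 1"
proof (cases "internal t (child1 tb b)")
  case True
  with assms have "marked t tb (child1 tb b)"
    using seg_extend[of b t tb v "tb b"] by (auto simp: bottom_def child1_def)
  then have "cut t tb (child1 tb b)" by (simp add: marked_def)
  then show ?thesis by (simp add: cut_iff_acc_at restart_def)
next
  case False
  obtain g l r where "subf t b = Some (Gate g l r)"
    using seg_internal[of b t tb v] assms by (auto simp: bottom_def internal_def)
  then have "subf t (child1 tb b) = Some (if tb b then r else l)"
    by (simp add: child1_def subf_append)
  with False obtain x where "subf t (child1 tb b) = Some (Leaf x)"
    by (cases "if tb b then r else l") (auto simp: internal_def)
  then show ?thesis by (simp add: acc_at_def restart_def)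
qed

lemma acc_at_sq_le_exp:
  assumes "bottom t tb v b" "u \<in> seg t tb v"
  defines "m \<equiv> real (sz t (child1 tb b))"
  shows "(acc_at t tb u)\<^sup>2 \<le> exp ((real (sz t u) - m) / sqrt m)"
  using assms(2)
proof (induction u rule: measure_induct_rule[where f = "\<lambda>u. length b - length u"])
  case (less u)
  have b: "b \<in> seg t tb v"
    using assms(1) by (simp add: bottom_def)
  have u: "internal t u" "prefix u b"
    using less.prems seg_internal bottom_deepest[OF assms(1)] by auto
  define s1 s2 where "s1 = sz t (child1 tb u)" and "s2 = sz t (child2 tb u)"
  have sum: "s1 + s2 = sz t u" and "1 \<le> s2"
    using sz_child_sum[OF u(1)] sz_child2_pos[OF u(1)] by (simp_all add: s1_def s2_def)
  have "1 \<le> m" "m \<le> sz t b"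
    using sz_child1_pos[of t b] sz_child_sum[of t b tb] seg_internal[OF b]
    by (simp_all add: m_def)
  moreover have "sz t b \<le> sz t u"
    using sz_antimono[OF u(2)] .
  ultimately have gain: "branch_gain s1 s2 \<le> exp (real s2 / sqrt m)"
    using branch_gain_le_exp[OF \<open>1 \<le> s2\<close>, of "sz t (child1 tb b)"] sum by (simp add: m_def)
  have prev: "(restart (acc_at t tb (child1 tb u)))\<^sup>2 \<le> exp ((real s1 - m) / sqrt m)"
  proof (cases "u = b")
    case True
    then show ?thesis
      using restart_acc_at_child1_bottom[OF assms(1)] by (simp add: s1_def m_def)
  next
    case False
    then have "child1 tb u \<in> seg t tb v"
      using bottom_unique[OF assms(1)] less.prems by (auto simp: bottom_def)
    moreover have "child1 tb u \<noteq> v"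
      using prefix_length_le[OF seg_prefix[OF less.prems]] by (auto simp: child1_def)
    moreover have "length b - length (child1 tb u) < length b - length u"
      using prefix_length_less[OF strict_prefixI[OF u(2) False]] by (simp add: child1_def)
    ultimately show ?thesis
      using less.IH restart_acc_at_seg[of "child1 tb u" t tb v] by (simp add: s1_def)
  qed
  have "(acc_at t tb u)\<^sup>2 = (restart (acc_at t tb (child1 tb u)))\<^sup>2 * branch_gain s1 s2"
    using acc_at_sq_step[OF u(1)] by (simp add: s1_def s2_def)
  also have "\<dots> \<le> exp ((real s1 - m) / sqrt m) * exp (real s2 / sqrt m)"
    using prev gain by (intro mult_mono) (auto simp: branch_gain_def)
  also have "\<dots> = exp ((real (sz t u) - m) / sqrt m)"
    using sum by (simp flip: exp_add add_divide_distrib)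
  finally show ?case .
qed

lemma sqrt_half_sum_le:
  fixes m d :: real
  assumes "0 \<le> m" "1 \<le> d" "sqrt m < d"
  shows "sqrt (m + d) / sqrt 2 \<le> d"
proof -
  have "m < d\<^sup>2"
    using assms(1,3) real_sqrt_less_iff[of m "d\<^sup>2"] assms(2) by simp
  moreover have "d \<le> d\<^sup>2"
    using assms(2) by (simp add: power2_eq_square)
  ultimately have "sqrt (m + d) \<le> sqrt (2 * d\<^sup>2)"
    by simp
  also have "\<dots> = sqrt 2 * d"
    using assms(2) by (simp add: real_sqrt_mult)
  finally show ?thesis
    by (simp add: divide_le_eq mult.commute)
qed

lemma cut_top_child1_bottom_le:
  assumes "cut t tb v" "bottom t tb v b"
  shows "real (sz t (child1 tb b)) \<le> real (sz t v) - sqrt (real (sz t v)) / sqrt 2"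
proof -
  define m s where "m = real (sz t (child1 tb b))" and "s = real (sz t v)"
  have b: "internal t b" "sz t b \<le> sz t v"
    using assms(2) seg_internal sz_seg_le by (auto simp: bottom_def)
  have "1 \<le> m"
    using sz_child1_pos[OF b(1), of tb] by (simp add: m_def)
  have "sz t (child1 tb b) + 1 \<le> sz t v"
    using sz_child2_pos[OF b(1), of tb] sz_child_sum[OF b(1), of tb] b(2) by linarith
  then have "1 \<le> s - m"
    by (simp add: m_def s_def)
  have "(sqrt (exp 1))\<^sup>2 < (acc_at t tb v)\<^sup>2"
    using assms(1) by (intro power_strict_mono) (auto simp: cut_iff_acc_at)
  then have "exp 1 < (acc_at t tb v)\<^sup>2"
    by simp
  also have "(acc_at t tb v)\<^sup>2 \<le> exp ((s - m) / sqrt m)"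
    using acc_at_sq_le_exp[OF assms(2) top_in_seg] assms(1)
    by (simp add: m_def s_def cut_iff_acc_at)
  finally have "sqrt m < s - m"
    using \<open>1 \<le> m\<close> by (simp add: less_divide_eq)
  then have "sqrt (m + (s - m)) / sqrt 2 \<le> s - m"
    using \<open>1 \<le> m\<close> \<open>1 \<le> s - m\<close> by (intro sqrt_half_sum_le) auto
  then show ?thesis
    by (simp add: m_def s_def)
qed

lemma cut_if_cp_top_notin_S: "cp_top t tb v \<Longrightarrow> \<not> inS t tb v \<Longrightarrow> cut t tb v"
  by (auto simp: cp_top_def marked_def inS_def)

lemma sorted_children'_bottom:
  fixes c :: "nat \<Rightarrow> pos" and J :: nat
  assumes c_bij: "bij_betw c {1..J+1} (children' t tb v)"
    and c_sorted: "\<And>i j. 1 \<le> i \<Longrightarrow> i \<le> j \<Longrightarrow> j \<le> J + 1 \<Longrightarrow> length (c j) \<le> length (c i)"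
  shows "bottom t tb v (butlast (c 1))"
    and "{c 1, c 2} = {child1 tb (butlast (c 1)), child2 tb (butlast (c 1))}"
proof -
  define b where "b = butlast (c 1)"
  have img: "c ` {1..J+1} = children' t tb v" and inj: "inj_on c {1..J+1}"
    using c_bij by (auto simp: bij_betw_def)
  have deepest: "length x \<le> length (c 1)" if "x \<in> children' t tb v" for x
  proof -
    have "x \<in> c ` {1..J+1}"
      using that img by simp
    then obtain j where "j \<in> {1..J+1}" "x = c j" ..
    then show ?thesis using c_sorted[of 1 j] by simp
  qed
  have "c 1 \<in> children' t tb v"
    using img by auto
  then have c1: "c 1 \<noteq> []" "b \<in> seg t tb v" "length (c 1) = Suc (length b)"
    by (auto simp: children'_def b_def)
  have "child1 tb b \<notin> seg t tb v"
  proof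
    assume "child1 tb b \<in> seg t tb v"
    then have "length (child2 tb (child1 tb b)) \<le> length (c 1)"
      by (rule deepest[OF child2_in_children'])
    then show False
      using c1(3) by (simp add: child1_def child2_def)
  qed
  with c1 show bot: "bottom t tb v b"
    by (simp add: bottom_def)
  obtain d where d: "{c 1, d} = {child1 tb b, child2 tb b}" "d \<noteq> c 1"
  proof (cases "c 1 = child1 tb b")
    case True
    then show ?thesis using that[of "child2 tb b"] by auto
  next
    case False
    then have "c 1 = child2 tb b"
      using butlast_child_cases[OF c1(1), of tb] by (simp add: b_def)
    then show ?thesis using that[of "child1 tb b"] by auto
  qed
  then have "d \<in> children' t tb v"
    using child1_bottom_in_children'[OF bot] child2_in_children'[OF c1(2)] by auto
  then have "d \<in> c ` {1..J+1}"
    using img by simp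
  then obtain k where "k \<in> {1..J+1}" and k: "c k = d"
    by (auto simp: image_iff)
  with d(2) have k2: "k \<in> {2..J+1}"
    by (cases "k = 1") auto
  have "d = child1 tb b \<or> d = child2 tb b"
    using d(1) by blast
  then have "length (c k) = Suc (length b)"
    using k by (auto simp: child1_def child2_def)
  moreover have "length (c k) \<le> length (c 2)" "length (c 2) \<le> length (c 1)"
    using c_sorted[of 2 k] c_sorted[of 1 2] k2 by simp_all
  ultimately have len2: "length (c 2) = Suc (length b)"
    using c1(3) by simp
  have in12: "1 \<in> {1..J+1}" "2 \<in> {1..J+1}"
    using k2 by simp_all
  then have "c 2 \<in> children' t tb v"
    using img by blast
  then have c2: "c 2 \<noteq> []" "butlast (c 2) \<in> seg t tb v"
    by (auto simp: children'_def)
  then have "butlast (c 2) = b"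
    using seg_eq_if_length_eq[OF _ c1(2)] len2 by simp
  moreover have "c 2 \<noteq> c 1"
    using inj_onD[OF inj _ in12(2,1)] by auto
  ultimately have "c 2 = d"
    using butlast_child_cases[OF c2(1), of tb] d by auto
  then show "{c 1, c 2} = {child1 tb b, child2 tb b}"
    using d(1) by simp
qed

lemma sorted_children'_le_half:
  fixes c :: "nat \<Rightarrow> pos" and J :: nat
  assumes tb: "admissible_tb t tb"
    and c_bij: "bij_betw c {1..J+1} (children' t tb v)"
    and c_sorted: "\<And>i j. 1 \<le> i \<Longrightarrow> i \<le> j \<Longrightarrow> j \<le> J + 1 \<Longrightarrow> length (c j) \<le> length (c i)"
    and c12: "sz t (c 2) \<le> sz t (c 1)"
    and j: "j \<in> {2..J+1}"
  shows "real (sz t (c j)) \<le> real (sz t v) / 2"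
proof -
  define b where "b = butlast (c 1)"
  have bot: "bottom t tb v b" and sib: "{c 1, c 2} = {child1 tb b, child2 tb b}"
    using sorted_children'_bottom[OF c_bij c_sorted] by (simp_all add: b_def)
  have "c j \<in> children' t tb v"
    using c_bij j by (auto simp: bij_betw_def)
  then show ?thesis
  proof (cases rule: children'_cases)
    case 1
    then have "real (sz t (c j)) \<le> real (sz t (butlast (c j))) / 2"
      using sz_child2_le_half[OF tb seg_internal[OF 1(1)]] 1(2) by simp
    also have "\<dots> \<le> real (sz t v) / 2"
      using sz_seg_le[OF 1(1)] by simp
    finally show ?thesis .
  next
    case 2
    then have "c j = child1 tb b"
      using bottom_unique[OF bot] by simp
    moreover have "c j \<noteq> c 1"
      using c_bij j by (auto simp: bij_betw_def dest: inj_onD)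
    ultimately have "c j = c 2" "{c j, c 1} = {child1 tb b, child2 tb b}"
      using sib by (auto simp: doubleton_eq_iff)
    moreover have "internal t b" "sz t b \<le> sz t v"
      using bot seg_internal sz_seg_le by (auto simp: bottom_def)
    ultimately have "sz t (c j) \<le> sz t (c 1)" "sz t (c j) + sz t (c 1) = sz t b" "sz t b \<le> sz t v"
      using c12 sz_child_sum[of t b tb] by (auto simp: doubleton_eq_iff)
    then show ?thesis
      by simp
  qed
qed

lemma sorted_children'_first_le:
  fixes c :: "nat \<Rightarrow> pos" and J :: nat
  assumes tb: "admissible_tb t tb"
    and c_bij: "bij_betw c {1..J+1} (children' t tb v)"
    and c_sorted: "\<And>i j. 1 \<le> i \<Longrightarrow> i \<le> j \<Longrightarrow> j \<le> J + 1 \<Longrightarrow> length (c j) \<le> length (c i)"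
    and "cut t tb v"
  shows "real (sz t (c 1)) \<le> real (sz t v) - sqrt (real (sz t v)) / sqrt 2"
proof -
  define b where "b = butlast (c 1)"
  have bot: "bottom t tb v b" and "{c 1, c 2} = {child1 tb b, child2 tb b}"
    using sorted_children'_bottom[OF c_bij c_sorted] by (simp_all add: b_def)
  then have "c 1 = child1 tb b \<or> c 1 = child2 tb b"
    by blast
  then have "sz t (c 1) \<le> sz t (child1 tb b)"
    using tb seg_internal[of b t tb v] bot by (auto simp: admissible_tb_def bottom_def)
  also have "real (sz t (child1 tb b)) \<le> real (sz t v) - sqrt (real (sz t v)) / sqrt 2"
    using cut_top_child1_bottom_le[OF \<open>cut t tb v\<close> bot] .
  finally show ?thesis by simp
qed

theorem lemma3p12:
  fixes t :: "'a formula" and tb :: "pos \<Rightarrow> bool" and v :: pos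
    and c :: "nat \<Rightarrow> pos" and J :: nat
  assumes tb: "admissible_tb t tb"
    and v: "cp_top t tb v"
    and J: "J = card (seg t tb v)"
    and c_bij: "bij_betw c {1..J+1} (children' t tb v)"
    and c_sorted: "\<And>i j. 1 \<le> i \<Longrightarrow> i \<le> j \<Longrightarrow> j \<le> J + 1 \<Longrightarrow> length (c j) \<le> length (c i)"
    and c12: "sz t (c 2) \<le> sz t (c 1)"
  shows "(\<forall>j\<in>{2..J+1}. real (sz t (c j)) \<le> real (sz t v) / 2)
       \<and> (\<not> small t tb v \<longrightarrow>
            real (sz t (c 1)) \<le> real (sz t v) - sqrt (real (sz t v)) / sqrt 2)"
proof (intro conjI ballI impI)
  show "real (sz t (c j)) \<le> real (sz t v) / 2" if "j \<in> {2..J+1}" for j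
    using sorted_children'_le_half[OF tb c_bij c_sorted c12 that] .
  show "real (sz t (c 1)) \<le> real (sz t v) - sqrt (real (sz t v)) / sqrt 2"
    if "\<not> small t tb v"
    using sorted_children'_first_le[OF tb c_bij c_sorted] cut_if_cp_top_notin_S[OF v] that
    by (simp add: small_def)
qed

end
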